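(* Let $(\Gamma,\boldsymbol{\ell})$ be a metric graph, $f$ an eigenfunction with eigenvalue $k^2\ne0$, and $\mathbf{x}=\mathrm{tr}_k(f)$. Let $\mathrm{supp}(f)$ be the set of edges $e_j$ with $f|_{e_j}\not\equiv0$ and set $s_j=e^{ik\ell_j}$ for $e_j\in\mathrm{supp}(f)$. Then the set $\mathcal{T}(\Gamma)_{\mathbf{x}}:=\{\mathbf{z}\in\Sigma(\Gamma):(\mathbf{z},\mathbf{x})\in\mathcal{T}(\Gamma)\}$ equals $\{\mathbf{z}\in\mathbb{T}^N: z_j=s_j\text{ for every }e_j\in\mathrm{supp}(f)\}$; in particular it is a torus of dimension $N-|\mathrm{supp}(f)|$ contained in $\Sigma(\Gamma)$.
   Context: $\Gamma$: finite graph with edges $e_1,\dots,e_N$, each oriented. $(\Gamma,\boldsymbol{\ell})$: $e_j\cong[0,\ell_j]$, Laplacian $-d^2/dt^2$ edgewise with standard vertex conditions (continuity, zero sum of outgoing derivatives at each vertex). For an eigenpair with $k>0$: $f|_{e_j}(t)=A_j\cos(kt)+B_j\sin(kt)=C_j\cos(k(\ell_j-t))+D_j\sin(k(\ell_j-t))$, and $\mathrm{tr}_k(f)\in\mathbb{C}^{4N}$ is the vector of all $A_j,B_j,C_j,D_j$ (for $k=0$, constant $c$: $A_j=C_j=c$, $B_j=D_j=0$). $\mathbb{T}^N=\{\mathbf{z}\in\mathbb{C}^N:|z_j|=1\}$, $\exp(ik\boldsymbol{\ell})=(e^{ik\ell_j})_j$. Trace space $\mathcal{T}(\Gamma)=\{(\exp(ik\boldsymbol{\ell}'),\mathrm{tr}_{k}(g))\}$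 over all $\boldsymbol{\ell}'\in\mathbb{R}_+^N$, $k\ge0$ with $k^2$ an eigenvalue of $(\Gamma,\boldsymbol{\ell}')$, and $g$ in the corresponding eigenspace (including $0$); $\Sigma(\Gamma)$ is its projection to $\mathbb{T}^N$. *)

theory Defs
  imports "HOL-Analysis.Analysis"
begin

text \<open>Metric graph: a finite set of oriented edges, given by the finite type 'e
  (so N = CARD('e)), with source and target vertex maps src, tgt :: 'e => 'v
  (loops and multiple edges allowed) and edge lengths len :: 'e => real, len e > 0.
  Edge e is identified with the interval [0, len e]. A function on the metric graph
  is g :: 'e => real => complex; only the values g e t with t in [0, len e] matter.\<close>

definition edge_int :: "('e \<Rightarrow> real) \<Rightarrow> 'e \<Rightarrow> real set" where
  "edge_int len e = {0 .. len e}"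

definition edge_deriv :: "('e \<Rightarrow> real) \<Rightarrow> ('e \<Rightarrow> real \<Rightarrow> complex) \<Rightarrow> 'e \<Rightarrow> real \<Rightarrow> complex" where
  "edge_deriv len g e t = vector_derivative (g e) (at t within edge_int len e)"

definition solves_eig ::
  "('e::finite \<Rightarrow> 'v) \<Rightarrow> ('e \<Rightarrow> 'v) \<Rightarrow> ('e \<Rightarrow> real) \<Rightarrow> real \<Rightarrow> ('e \<Rightarrow> real \<Rightarrow> complex) \<Rightarrow> bool" where
  "solves_eig src tgt len k g \<longleftrightarrow>
     (\<forall>e. \<exists>g'. \<forall>t\<in>edge_int len e.
          (g e has_vector_derivative g' t) (at t within edge_int len e) \<and>
          (g' has_vector_derivative (- complex_of_real (k ^ 2) * g e t)) (at t within edge_int len e))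
   \<and> (\<forall>v. \<forall>a\<in>{g e 0 | e. src e = v} \<union> {g e (len e) | e. tgt e = v}.
            \<forall>b\<in>{g e 0 | e. src e = v} \<union> {g e (len e) | e. tgt e = v}. a = b)
   \<and> (\<forall>v. (\<Sum>e\<in>{e. src e = v}. edge_deriv len g e 0)
          - (\<Sum>e\<in>{e. tgt e = v}. edge_deriv len g e (len e)) = 0)"

definition edge_nonzero :: "('e \<Rightarrow> real) \<Rightarrow> ('e \<Rightarrow> real \<Rightarrow> complex) \<Rightarrow> 'e \<Rightarrow> bool" where
  "edge_nonzero len g e \<longleftrightarrow> (\<exists>t\<in>edge_int len e. g e t \<noteq> 0)"

definition supp_edges :: "('e \<Rightarrow> real) \<Rightarrow> ('e \<Rightarrow> real \<Rightarrow> complex) \<Rightarrow> 'e set" where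
  "supp_edges len g = {e. edge_nonzero len g e}"

definition is_eigenfunction ::
  "('e::finite \<Rightarrow> 'v) \<Rightarrow> ('e \<Rightarrow> 'v) \<Rightarrow> ('e \<Rightarrow> real) \<Rightarrow> real \<Rightarrow> ('e \<Rightarrow> real \<Rightarrow> complex) \<Rightarrow> bool" where
  "is_eigenfunction src tgt len k g \<longleftrightarrow> solves_eig src tgt len k g \<and> (\<exists>e. edge_nonzero len g e)"

definition is_eigenvalue_sq ::
  "('e::finite \<Rightarrow> 'v) \<Rightarrow> ('e \<Rightarrow> 'v) \<Rightarrow> ('e \<Rightarrow> real) \<Rightarrow> real \<Rightarrow> bool" where
  "is_eigenvalue_sq src tgt len k \<longleftrightarrow> (\<exists>g. is_eigenfunction src tgt len k g)"

text \<open>For k > 0 these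
  are the coefficients with g e t = A cos(kt) + B sin(kt) = C cos(k(len e - t)) + D sin(k(len e - t))
  on the edge; for k = 0 (g locally constant) A = C = value, B = D = 0.\<close>
definition trace_k ::
  "real \<Rightarrow> ('e \<Rightarrow> real) \<Rightarrow> ('e \<Rightarrow> real \<Rightarrow> complex) \<Rightarrow> 'e \<Rightarrow> complex \<times> complex \<times> complex \<times> complex" where
  "trace_k k len g e =
     (if k = 0 then (g e 0, 0, g e (len e), 0)
      else (THE (A, B, C, D). \<forall>t\<in>edge_int len e.
               g e t = A * complex_of_real (cos (k * t)) + B * complex_of_real (sin (k * t)) \<and>
               g e t = C * complex_of_real (cos (k * (len e - t))) + D * complex_of_real (sin (k * (len e - t)))))"

definition exp_vec :: "real \<Rightarrow> ('e \<Rightarrow> real) \<Rightarrow> 'e \<Rightarrow> complex" where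
  "exp_vec k len = (\<lambda>e. exp (\<i> * complex_of_real (k * len e)))"

definition trace_space ::
  "('e::finite \<Rightarrow> 'v) \<Rightarrow> ('e \<Rightarrow> 'v) \<Rightarrow> (('e \<Rightarrow> complex) \<times> ('e \<Rightarrow> complex \<times> complex \<times> complex \<times> complex)) set" where
  "trace_space src tgt =
     {(exp_vec k len', trace_k k len' g) | len' k g.
        (\<forall>e. len' e > 0) \<and> k \<ge> 0 \<and> is_eigenvalue_sq src tgt len' k \<and> solves_eig src tgt len' k g}"

definition Sigma_graph ::
  "('e::finite \<Rightarrow> 'v) \<Rightarrow> ('e \<Rightarrow> 'v) \<Rightarrow> ('e \<Rightarrow> complex) set" where
  "Sigma_graph src tgt = fst ` trace_space src tgt"

definition trace_fibre ::
  "('e::finite \<Rightarrow> 'v) \<Rightarrow> ('e \<Rightarrow> 'v) \<Rightarrow> ('e \<Rightarrow> complex \<times> complex \<times> complex \<times> complex) \<Rightarrow> ('e \<Rightarrow> complex) set" where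
  "trace_fibre src tgt x = {z \<in> Sigma_graph src tgt. (z, x) \<in> trace_space src tgt}"

end

theory Submission
  imports Defs
begin

text \<open>On an edge of the support an eigenfunction with k > 0 is A cos kt + B sin kt with
  (A, B) \<noteq> (0, 0), and its trace (A, B, C, D) satisfies C + iD = (A - iB) e^{ikl} and
  C - iD = (A + iB) e^{-ikl}, so the trace alone determines e^{ikl} there. This also covers
  traces taken at k = 0: a discrete Green identity shows that solutions with k = 0 are constant
  on every edge, so their traces look like those of kl = 0. Conversely, a point z of the torus
  with the prescribed phases on the support is reached by keeping f on the support, setting it
  to zero elsewhere and choosing the remaining edge lengths l'_j with e^{ikl'_j} = z_j; the
  vertex conditions only see the support and are unaffected.\<close>

abbreviation trig_comb :: "complex \<Rightarrow> complex \<Rightarrow> real \<Rightarrow> real \<Rightarrow> complex" where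
  "trig_comb A B k t \<equiv> A * complex_of_real (cos (k * t)) + B * complex_of_real (sin (k * t))"

definition end_coeffs :: "complex \<Rightarrow> complex \<Rightarrow> real \<Rightarrow> complex \<times> complex \<times> complex \<times> complex" where
  "end_coeffs A B \<theta> =
     (A, B, A * complex_of_real (cos \<theta>) + B * complex_of_real (sin \<theta>),
      A * complex_of_real (sin \<theta>) - B * complex_of_real (cos \<theta>))"

lemma trig_comb_reflect:
  assumes "end_coeffs A B (k * L) = (A, B, C, D)"
  shows "trig_comb A B k t = trig_comb C D k (L - t)"
proof -
  have C: "C = A * complex_of_real (cos (k*L)) + B * complex_of_real (sin (k*L))"
    and D: "D = A * complex_of_real (sin (k*L)) - B * complex_of_real (cos (k*L))"
    using assms by (simp_all add: end_coeffs_def)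
  have kt: "k*t = k*L - k*(L-t)" by (simp add: algebra_simps)
  have "cos (k*t) = cos (k*L) * cos (k*(L-t)) + sin (k*L) * sin (k*(L-t))"
    "sin (k*t) = sin (k*L) * cos (k*(L-t)) - cos (k*L) * sin (k*(L-t))"
    by (subst kt, simp only: cos_diff sin_diff)+
  then show ?thesis
    unfolding C D by (simp only: of_real_add of_real_diff of_real_mult) (simp add: algebra_simps)
qed

lemma trig_comb_coeffs_unique:
  assumes "L > 0" "k > 0" and eq: "\<forall>t\<in>{0..L}. trig_comb A B k t = trig_comb A' B' k t"
  shows "A = A' \<and> B = B'"
proof -
  have "A = A'" using eq \<open>L > 0\<close> by (drule_tac x=0 in bspec) auto
  define t0 where "t0 = min L (pi / (2*k))"
  have t0: "t0 \<in> {0..L}" and "0 < k * t0" "k * t0 \<le> pi/2"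
    using assms by (auto simp: t0_def min_def field_simps)
  then have "sin (k*t0) > 0" by (intro sin_gt_zero) auto
  moreover have "B * sin (k*t0) = B' * sin (k*t0)" using eq t0 \<open>A = A'\<close> by auto
  ultimately show ?thesis using \<open>A = A'\<close> by simp
qed

lemma trace_k_eq_end_coeffs:
  assumes "k > 0" "len e > 0" and g: "\<forall>t\<in>edge_int len e. g e t = trig_comb A B k t"
  shows "trace_k k len g e = end_coeffs A B (k * len e)"
proof -
  define L where "L = len e"
  obtain C D where CD: "end_coeffs A B (k * L) = (A, B, C, D)"
    by (simp add: end_coeffs_def)
  have "(THE (A', B', C', D').
          \<forall>t\<in>{0..L}. g e t = trig_comb A' B' k t \<and> g e t = trig_comb C' D' k (L - t))
        = (A, B, C, D)"
  proof (rule the_equality, goal_cases)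
    case 1
    then show ?case using g trig_comb_reflect[OF CD] by (simp add: L_def edge_int_def)
  next
    case (2 x)
    obtain A' B' C' D' where x: "x = (A', B', C', D')" by (cases x)
    have hyp: "\<forall>t\<in>{0..L}. g e t = trig_comb A' B' k t \<and> g e t = trig_comb C' D' k (L - t)"
      using 2 unfolding x by (simp only: case_prod_conv)
    have "A' = A \<and> B' = B"
      using hyp g assms(1,2) by (intro trig_comb_coeffs_unique[of L]) (auto simp: L_def edge_int_def)
    moreover have "\<forall>s\<in>{0..L}. trig_comb C' D' k s = trig_comb C D k s"
    proof
      fix s assume "s \<in> {0..L}"
      then have Ls: "L - s \<in> {0..L}" by auto
      have "g e (L - s) = trig_comb C' D' k s"
        using conjunct2[OF hyp[rule_format, OF Ls]] by simp
      moreover have "g e (L - s) = trig_comb C D k s"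
        using g Ls trig_comb_reflect[OF CD, of "L - s"] by (simp add: L_def edge_int_def)
      ultimately show "trig_comb C' D' k s = trig_comb C D k s" by simp
    qed
    then have "C' = C \<and> D' = D"
      using assms(1,2) by (intro trig_comb_coeffs_unique[of L]) (auto simp: L_def)
    ultimately show ?case by (simp add: x)
  qed
  then show ?thesis
    using \<open>k > 0\<close> CD by (simp add: trace_k_def edge_int_def L_def)
qed

lemma end_coeffs_exp:
  assumes "end_coeffs A B \<theta> = (A, B, C, D)"
  shows "(A - \<i> * B) * exp (\<i> * complex_of_real \<theta>) = C + \<i> * D"
    and "(A + \<i> * B) * exp (- (\<i> * complex_of_real \<theta>)) = C - \<i> * D"
proof -
  have euler: "exp (\<i> * complex_of_real \<theta>) = complex_of_real (cos \<theta>) + \<i> * complex_of_real (sin \<theta>)"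
    "exp (- (\<i> * complex_of_real \<theta>)) = complex_of_real (cos \<theta>) - \<i> * complex_of_real (sin \<theta>)"
    using cis_conv_exp[of \<theta>] cis_conv_exp[of "-\<theta>"] by (simp_all add: cis.code Complex_eq)
  have CD: "C = A * complex_of_real (cos \<theta>) + B * complex_of_real (sin \<theta>)"
    "D = A * complex_of_real (sin \<theta>) - B * complex_of_real (cos \<theta>)"
    using assms by (auto simp: end_coeffs_def)
  show "(A - \<i> * B) * exp (\<i> * complex_of_real \<theta>) = C + \<i> * D"
    "(A + \<i> * B) * exp (- (\<i> * complex_of_real \<theta>)) = C - \<i> * D"
    unfolding euler CD by (simp_all add: algebra_simps)
qed

lemma exp_eq_if_end_coeffs_eq:
  assumes eq: "end_coeffs A B \<theta> = end_coeffs A' B' \<theta>'" and nz: "(A, B) \<noteq> (0, 0)"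
  shows "exp (\<i> * complex_of_real \<theta>) = exp (\<i> * complex_of_real \<theta>')"
proof -
  obtain C D where \<theta>: "end_coeffs A B \<theta> = (A, B, C, D)"
    and \<theta>': "end_coeffs A B \<theta>' = (A, B, C, D)"
    using eq by (auto simp: end_coeffs_def)
  have "A - \<i> * B \<noteq> 0 \<or> A + \<i> * B \<noteq> 0"
    using nz by (auto simp: algebra_simps)
  then show ?thesis
  proof
    assume "A - \<i> * B \<noteq> 0"
    moreover have "(A - \<i> * B) * exp (\<i> * complex_of_real \<theta>) =
        (A - \<i> * B) * exp (\<i> * complex_of_real \<theta>')"
      using end_coeffs_exp(1)[OF \<theta>] end_coeffs_exp(1)[OF \<theta>'] by (simp only:)
    ultimately show ?thesis by simp
  next
    assume "A + \<i> * B \<noteq> 0"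
    moreover have "(A + \<i> * B) * exp (- (\<i> * complex_of_real \<theta>)) =
        (A + \<i> * B) * exp (- (\<i> * complex_of_real \<theta>'))"
      using end_coeffs_exp(2)[OF \<theta>] end_coeffs_exp(2)[OF \<theta>'] by (simp only:)
    ultimately show ?thesis by (simp add: exp_minus)
  qed
qed

lemma harmonic_ode_solution:
  fixes h h' :: "real \<Rightarrow> complex"
  assumes "k > 0" "convex S"
    and ode: "\<forall>t\<in>S. (h has_vector_derivative h' t) (at t within S) \<and>
                 (h' has_vector_derivative - complex_of_real (k ^ 2) * h t) (at t within S)"
  shows "\<exists>A B. \<forall>t\<in>S. h t = trig_comb A B k t"
proof -
  define K where "K = complex_of_real k"
  define c where "c t = complex_of_real (cos (k * t))" for t
  define s where "s t = complex_of_real (sin (k * t))" for t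
  \<comment> \<open>The point (k h, h') rotated back by the angle k t is constant.\<close>
  define p where "p t = K * h t * c t - h' t * s t" for t
  define q where "q t = K * h t * s t + h' t * c t" for t
  have "(p has_vector_derivative 0) (at t within S) \<and> (q has_vector_derivative 0) (at t within S)"
    if "t \<in> S" for t
  proof -
    have c': "(c has_vector_derivative - K * s t) (at t within S)"
      and s': "(s has_vector_derivative K * c t) (at t within S)"
      unfolding c_def s_def K_def by (auto intro!: derivative_eq_intros)
    have h': "(h has_vector_derivative h' t) (at t within S)"
      and h'': "(h' has_vector_derivative - (K * K) * h t) (at t within S)"
      using ode that by (auto simp: K_def power2_eq_square)
    have "(p has_vector_derivative
            K * h t * (- K * s t) + K * h' t * c t - (h' t * (K * c t) + - (K * K) * h t * s t))
          (at t within S)"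
      and "(q has_vector_derivative
            K * h t * (K * c t) + K * h' t * s t + (h' t * (- K * s t) + - (K * K) * h t * c t))
          (at t within S)"
      unfolding p_def[abs_def] q_def[abs_def]
      by (intro has_vector_derivative_diff has_vector_derivative_add has_vector_derivative_mult
          has_vector_derivative_mult_right h' h'' c' s')+
    then show ?thesis by (simp add: algebra_simps)
  qed
  then obtain A0 B0 where "\<And>t. t \<in> S \<Longrightarrow> p t = A0" "\<And>t. t \<in> S \<Longrightarrow> q t = B0"
    using has_vector_derivative_zero_constant[OF \<open>convex S\<close>] by metis
  moreover have "K * h t = p t * c t + q t * s t" for t
  proof -
    have "c t * c t + s t * s t = 1"
      unfolding c_def s_def of_real_mult[symmetric] of_real_add[symmetric]
      by (simp add: power2_eq_square[symmetric])
    moreover have "p t * c t + q t * s t = K * h t * (c t * c t + s t * s t)"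
      unfolding p_def q_def by (simp add: algebra_simps)
    ultimately show ?thesis by simp
  qed
  moreover have "K \<noteq> 0" using \<open>k > 0\<close> by (simp add: K_def)
  ultimately have "h t = trig_comb (A0 / K) (B0 / K) k t" if "t \<in> S" for t
    using that by (simp add: c_def s_def field_simps)
  then show ?thesis by blast
qed

lemma solves_eig_edge_ode:
  assumes "solves_eig src tgt len k g"
  obtains g' where "\<forall>t\<in>edge_int len e. (g e has_vector_derivative g' t) (at t within edge_int len e) \<and>
      (g' has_vector_derivative - complex_of_real (k ^ 2) * g e t) (at t within edge_int len e)"
  using assms unfolding solves_eig_def by blast

lemma solves_eig_trig_comb_on_edge:
  assumes "k > 0" "solves_eig src tgt len k g"
  shows "\<exists>A B. \<forall>t\<in>edge_int len e. g e t = trig_comb A B k t"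
proof -
  obtain g' where "\<forall>t\<in>edge_int len e. (g e has_vector_derivative g' t) (at t within edge_int len e) \<and>
      (g' has_vector_derivative - complex_of_real (k ^ 2) * g e t) (at t within edge_int len e)"
    using solves_eig_edge_ode[OF assms(2)] .
  then show ?thesis
    using harmonic_ode_solution[OF \<open>k > 0\<close>] by (simp add: edge_int_def)
qed

lemma solves_eig_0_affine_on_edge:
  assumes "len e > 0" "solves_eig src tgt len 0 g" and t: "t \<in> edge_int len e"
  shows "g e t = g e 0 + edge_deriv len g e 0 * t" and "edge_deriv len g e t = edge_deriv len g e 0"
proof -
  obtain g' where "\<forall>t\<in>edge_int len e. (g e has_vector_derivative g' t) (at t within edge_int len e) \<and>
      (g' has_vector_derivative - complex_of_real (0 ^ 2) * g e t) (at t within edge_int len e)"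
    using solves_eig_edge_ode[OF assms(2)] .
  then have g': "\<And>t. t \<in> {0..len e} \<Longrightarrow> (g e has_vector_derivative g' t) (at t within {0..len e})"
    and g'': "\<And>t. t \<in> {0..len e} \<Longrightarrow> (g' has_vector_derivative 0) (at t within {0..len e})"
    by (simp_all add: edge_int_def)
  obtain b where b: "\<And>t. t \<in> {0..len e} \<Longrightarrow> g' t = b"
    using has_vector_derivative_zero_constant[of "{0..len e}" g', OF _ g''] by blast
  have deriv: "edge_deriv len g e s = b" if "s \<in> {0..len e}" for s
    unfolding edge_deriv_def edge_int_def
    using vector_derivative_within_closed_interval[OF \<open>len e > 0\<close> that g'[OF that]] b[OF that] by simp
  have "((\<lambda>s. g e s - b * s) has_vector_derivative 0) (at s within {0..len e})"
    if "s \<in> {0..len e}" for s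
    using g'[OF that] b[OF that] by (auto intro!: derivative_eq_intros)
  then obtain a where a: "\<And>s. s \<in> {0..len e} \<Longrightarrow> g e s - b * s = a"
    using has_vector_derivative_zero_constant[of "{0..len e}" "\<lambda>s. g e s - b * s"] by blast
  have "0 \<in> {0..len e}" "t \<in> {0..len e}" using \<open>len e > 0\<close> t by (simp_all add: edge_int_def)
  from a[OF this(1)] a[OF this(2)] deriv[OF this(1)] deriv[OF this(2)]
  show "g e t = g e 0 + edge_deriv len g e 0 * t" "edge_deriv len g e t = edge_deriv len g e 0"
    by (simp_all add: algebra_simps)
qed

lemma solves_eig_vertex_values:
  assumes "solves_eig src tgt len k g"
  obtains \<phi> where "\<And>e. g e 0 = \<phi> (src e)" "\<And>e. g e (len e) = \<phi> (tgt e)"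
proof -
  define vals where "vals v = {g e 0 | e. src e = v} \<union> {g e (len e) | e. tgt e = v}" for v
  have pick: "x = (SOME x. x \<in> vals v)" if "x \<in> vals v" for x v
    using assms someI[of "\<lambda>x. x \<in> vals v" x] that unfolding solves_eig_def vals_def by blast
  show ?thesis
    by (rule that[of "\<lambda>v. SOME x. x \<in> vals v"]; rule pick; auto simp: vals_def)
qed

lemma sum_potential_difference_conserved_flow:
  fixes src tgt :: "'e::finite \<Rightarrow> 'v" and b :: "'e \<Rightarrow> 'a::comm_ring"
  assumes conserved: "\<And>v. (\<Sum>e\<in>{e. src e = v}. b e) = (\<Sum>e\<in>{e. tgt e = v}. b e)"
  shows "(\<Sum>e\<in>UNIV. (\<phi> (tgt e) - \<phi> (src e)) * b e) = 0"
proof -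
  define V where "V = range src \<union> range tgt"
  have by_vertex: "(\<Sum>e\<in>UNIV. \<phi> (f e) * b e) = (\<Sum>v\<in>V. \<phi> v * (\<Sum>e\<in>{e. f e = v}. b e))"
    if "range f \<subseteq> V" for f :: "'e \<Rightarrow> 'v"
    using sum.group[of UNIV V f "\<lambda>e. \<phi> (f e) * b e"] that
    by (simp add: V_def sum_distrib_left)
  show ?thesis
    using by_vertex[of src] by_vertex[of tgt]
    by (simp add: V_def left_diff_distrib sum_subtractf conserved)
qed

lemma solves_eig_0_constant_on_edges:
  fixes g :: "'e::finite \<Rightarrow> real \<Rightarrow> complex"
  assumes len: "\<forall>e. len e > 0" and sol: "solves_eig src tgt len 0 g"
  shows "\<forall>t\<in>edge_int len e. g e t = g e 0"
proof -
  define b where "b e = edge_deriv len g e 0" for e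
  have end_in: "len e \<in> edge_int len e" for e
    using len by (simp add: edge_int_def less_imp_le)
  have kirchhoff: "(\<Sum>e\<in>{e. src e = v}. b e) = (\<Sum>e\<in>{e. tgt e = v}. b e)" for v
  proof -
    have "(\<Sum>e\<in>{e. src e = v}. edge_deriv len g e 0)
        - (\<Sum>e\<in>{e. tgt e = v}. edge_deriv len g e (len e)) = 0"
      using sol unfolding solves_eig_def by blast
    then show ?thesis
      using solves_eig_0_affine_on_edge(2)[OF len[rule_format] sol end_in] by (simp add: b_def)
  qed
  obtain \<phi> where \<phi>: "\<And>e. g e 0 = \<phi> (src e)" "\<And>e. g e (len e) = \<phi> (tgt e)"
    using solves_eig_vertex_values[OF sol] by blast
  have energy_term:
    "(cnj (\<phi> (tgt e)) - cnj (\<phi> (src e))) * b e = complex_of_real (len e * (cmod (b e))\<^sup>2)" for e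
  proof -
    have "\<phi> (tgt e) - \<phi> (src e) = b e * len e"
      using solves_eig_0_affine_on_edge(1)[OF len[rule_format] sol end_in, of e] \<phi>[of e]
      by (simp add: b_def)
    then have "cnj (\<phi> (tgt e)) - cnj (\<phi> (src e)) = cnj (b e) * len e"
      by (metis complex_cnj_diff complex_cnj_mult complex_cnj_complex_of_real)
    then have "(cnj (\<phi> (tgt e)) - cnj (\<phi> (src e))) * b e = len e * (b e * cnj (b e))"
      by (simp add: ac_simps)
    then show ?thesis
      by (simp only: complex_norm_square[symmetric] of_real_mult)
  qed
  \<comment> \<open>Discrete Green identity for the conjugate potential: the Dirichlet energy vanishes.\<close>
  have "(\<Sum>e\<in>UNIV. (cnj (\<phi> (tgt e)) - cnj (\<phi> (src e))) * b e) = 0"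
    using kirchhoff by (rule sum_potential_difference_conserved_flow)
  then have "complex_of_real (\<Sum>e\<in>UNIV. len e * (cmod (b e))\<^sup>2) = 0"
    by (simp only: of_real_sum energy_term)
  then have "(\<Sum>e\<in>UNIV. len e * (cmod (b e))\<^sup>2) = 0"
    by (simp only: of_real_eq_0_iff)
  then have "\<forall>e\<in>UNIV. len e * (cmod (b e))\<^sup>2 = 0"
    using len by (subst (asm) sum_nonneg_eq_0_iff) (auto simp: less_imp_le)
  then have "b e = 0"
    using len by (metis UNIV_I mult_eq_0_iff norm_eq_zero power_eq_0_iff less_irrefl)
  then show ?thesis
    using solves_eig_0_affine_on_edge(1)[OF len[rule_format] sol] by (simp add: b_def)
qed

lemma edge_nonzero_iff_trig_coeffs:
  assumes "k > 0" "len e > 0" and g: "\<forall>t\<in>edge_int len e. g e t = trig_comb A B k t"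
  shows "edge_nonzero len g e \<longleftrightarrow> (A, B) \<noteq> (0, 0)"
proof
  assume "edge_nonzero len g e"
  then show "(A, B) \<noteq> (0, 0)" using g by (auto simp: edge_nonzero_def)
next
  assume "(A, B) \<noteq> (0, 0)"
  then have "\<not> (\<forall>t\<in>{0..len e}. trig_comb A B k t = trig_comb 0 0 k t)"
    using trig_comb_coeffs_unique[OF \<open>len e > 0\<close> \<open>k > 0\<close>] by blast
  then show "edge_nonzero len g e" using g by (auto simp: edge_nonzero_def edge_int_def)
qed

lemma solves_eig_trace_k_end_coeffs:
  assumes len: "\<forall>e. len e > 0" and "k \<ge> 0" and sol: "solves_eig src tgt len k g"
  shows "\<exists>A B. trace_k k len g e = end_coeffs A B (k * len e)"
proof (cases "k = 0")
  case True
  have "len e \<in> edge_int len e" using len by (simp add: edge_int_def less_imp_le)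
  then have "g e (len e) = g e 0"
    using solves_eig_0_constant_on_edges[OF len, of src tgt g e] sol True by simp
  then have "trace_k k len g e = end_coeffs (g e 0) 0 (k * len e)"
    using True by (simp add: trace_k_def end_coeffs_def)
  then show ?thesis by blast
next
  case False
  then have "k > 0" using \<open>k \<ge> 0\<close> by simp
  then obtain A B where "\<forall>t\<in>edge_int len e. g e t = trig_comb A B k t"
    using solves_eig_trig_comb_on_edge[OF _ sol] by blast
  then show ?thesis
    using trace_k_eq_end_coeffs[where len=len and e=e, OF \<open>k > 0\<close>] len by blast
qed

lemma solves_eig_trace_k_supp:
  assumes "k > 0" "len e > 0" and sol: "solves_eig src tgt len k f"
  obtains A B where "trace_k k len f e = end_coeffs A B (k * len e)"
    and "e \<in> supp_edges len f \<longleftrightarrow> (A, B) \<noteq> (0, 0)"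
proof -
  obtain A B where f: "\<forall>t\<in>edge_int len e. f e t = trig_comb A B k t"
    using solves_eig_trig_comb_on_edge[OF \<open>k > 0\<close> sol] by blast
  show ?thesis
  proof
    show "trace_k k len f e = end_coeffs A B (k * len e)"
      using trace_k_eq_end_coeffs[where len=len and e=e and g=f, OF assms(1,2) f] .
    show "e \<in> supp_edges len f \<longleftrightarrow> (A, B) \<noteq> (0, 0)"
      using edge_nonzero_iff_trig_coeffs[where len=len and e=e and g=f, OF assms(1,2) f]
      by (simp add: supp_edges_def)
  qed
qed

lemma edge_deriv_vanishing_edge:
  assumes "len e > 0" "\<not> edge_nonzero len g e" "t \<in> edge_int len e"
  shows "edge_deriv len g e t = 0"
proof -
  have "\<And>s. s \<in> edge_int len e \<Longrightarrow> g e s = 0"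
    using assms(2) by (simp add: edge_nonzero_def)
  then have "(g e has_vector_derivative 0) (at t within edge_int len e)"
    using has_vector_derivative_transform[OF assms(3), of "g e" "\<lambda>_. 0"] by simp
  then show ?thesis
    using vector_derivative_within_closed_interval[OF assms(1)] assms(3)
    by (simp add: edge_deriv_def edge_int_def)
qed

lemma solves_eig_change_lengths_off_supp:
  fixes f :: "'e::finite \<Rightarrow> real \<Rightarrow> complex"
  assumes len: "\<forall>e. len e > 0" and len': "\<forall>e. len' e > 0"
    and same_len: "\<forall>e\<in>supp_edges len f. len' e = len e"
    and sol: "solves_eig src tgt len k f"
  shows "solves_eig src tgt len' k (\<lambda>e. if e \<in> supp_edges len f then f e else (\<lambda>_. 0))"
    (is "solves_eig _ _ _ _ ?g")
proof -
  define g where "g = ?g"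
  have vanish: "\<not> edge_nonzero len f e" "\<not> edge_nonzero len' g e" if "e \<notin> supp_edges len f" for e
    using that by (auto simp: supp_edges_def g_def edge_nonzero_def)
  have ends: "0 \<in> edge_int len e" "len e \<in> edge_int len e"
    "0 \<in> edge_int len' e" "len' e \<in> edge_int len' e" for e using len len' by (auto simp: edge_int_def less_imp_le)
  have same_vals: "g e 0 = f e 0" "g e (len' e) = f e (len e)" for e
    using vanish(1)[of e] ends[of e] same_len by (auto simp: g_def edge_nonzero_def)
  have same_derivs: "edge_deriv len' g e 0 = edge_deriv len f e 0 \<and>
      edge_deriv len' g e (len' e) = edge_deriv len f e (len e)" for e
  proof (cases "e \<in> supp_edges len f")
    case True
    then show ?thesis
      using same_len by (simp add: g_def edge_deriv_def edge_int_def)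
  next
    case False
    then show ?thesis
      using vanish ends len len' by (simp add: edge_deriv_vanishing_edge)
  qed
  have "\<exists>g'. \<forall>t\<in>edge_int len' e. (g e has_vector_derivative g' t) (at t within edge_int len' e) \<and>
      (g' has_vector_derivative - complex_of_real (k ^ 2) * g e t) (at t within edge_int len' e)" for e
  proof (cases "e \<in> supp_edges len f")
    case True
    then have "g e = f e" "edge_int len' e = edge_int len e"
      using same_len by (simp_all add: g_def edge_int_def)
    then show ?thesis
      using solves_eig_edge_ode[OF sol, of e] by (simp only:) blast
  next
    case False
    then show ?thesis
      by (intro exI[of _ "\<lambda>_. 0"]) (simp add: g_def)
  qed
  moreover have "\<forall>v. \<forall>a\<in>{g e 0 |e. src e = v} \<union> {g e (len' e) |e. tgt e = v}.
      \<forall>b\<in>{g e 0 |e. src e = v} \<union> {g e (len' e) |e. tgt e = v}. a = b"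
    unfolding same_vals by (rule sol[unfolded solves_eig_def, THEN conjunct2, THEN conjunct1])
  moreover have "\<forall>v. (\<Sum>e\<in>{e. src e = v}. edge_deriv len' g e 0)
      - (\<Sum>e\<in>{e. tgt e = v}. edge_deriv len' g e (len' e)) = 0"
    unfolding same_derivs[THEN conjunct1] same_derivs[THEN conjunct2]
    by (rule sol[unfolded solves_eig_def, THEN conjunct2, THEN conjunct2])
  ultimately have "solves_eig src tgt len' k g"
    unfolding solves_eig_def by (intro conjI; fast)
  then show ?thesis by (simp only: g_def)
qed

lemma trace_k_change_lengths_off_supp:
  assumes "k > 0" and len: "\<forall>e. len e > 0" and len': "\<forall>e. len' e > 0"
    and same_len: "\<forall>e\<in>supp_edges len f. len' e = len e"
    and sol: "solves_eig src tgt len k f"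
  shows "trace_k k len' (\<lambda>e. if e \<in> supp_edges len f then f e else (\<lambda>_. 0)) = trace_k k len f"
    (is "trace_k k len' ?g = _")
proof
  fix e
  show "trace_k k len' ?g e = trace_k k len f e"
  proof (cases "e \<in> supp_edges len f")
    case True
    then show ?thesis using same_len by (simp add: trace_k_def edge_int_def)
  next
    case False
    obtain A B where "trace_k k len f e = end_coeffs A B (k * len e)"
      and "e \<in> supp_edges len f \<longleftrightarrow> (A, B) \<noteq> (0, 0)"
      using solves_eig_trace_k_supp[OF \<open>k > 0\<close> _ sol] len by metis
    with False have "trace_k k len f e = end_coeffs 0 0 (k * len e)"
      by simp
    moreover have "trace_k k len' ?g e = end_coeffs 0 0 (k * len' e)"
      using trace_k_eq_end_coeffs[where len=len' and e=e and g="?g" and A=0 and B=0, OF \<open>k > 0\<close>]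
        len' False
      by simp
    ultimately show ?thesis by (simp add: end_coeffs_def)
  qed
qed

lemma trace_fibre_eq: "trace_fibre src tgt x = {z. (z, x) \<in> trace_space src tgt}"
  by (force simp: trace_fibre_def Sigma_graph_def)

lemma trace_space_torus: "(z, x) \<in> trace_space src tgt \<Longrightarrow> norm (z e) = 1"
  by (auto simp: trace_space_def exp_vec_def)

lemma trace_space_phase_on_supp:
  assumes len: "\<forall>e. len e > 0" and "k > 0" and sol: "solves_eig src tgt len k f"
    and z: "(z, trace_k k len f) \<in> trace_space src tgt" and e: "e \<in> supp_edges len f"
  shows "z e = exp_vec k len e"
proof -
  obtain len' k' g where zg: "z = exp_vec k' len'" "trace_k k len f = trace_k k' len' g"
    and len': "\<forall>e. len' e > 0" and "k' \<ge> 0" and sol': "solves_eig src tgt len' k' g"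
    using z unfolding trace_space_def by auto
  obtain A B where f: "trace_k k len f e = end_coeffs A B (k * len e)" "(A, B) \<noteq> (0, 0)"
    using solves_eig_trace_k_supp[OF \<open>k > 0\<close> _ sol] len e by metis
  obtain A' B' where "trace_k k' len' g e = end_coeffs A' B' (k' * len' e)"
    using solves_eig_trace_k_end_coeffs[OF len' \<open>k' \<ge> 0\<close> sol'] by blast
  with f(1) zg(2) have "end_coeffs A B (k * len e) = end_coeffs A' B' (k' * len' e)"
    by simp
  from exp_eq_if_end_coeffs_eq[OF this f(2)] show ?thesis
    unfolding zg(1) exp_vec_def by simp
qed

lemma unit_circle_exp_pos_angle:
  assumes "norm (w::complex) = 1"
  shows "\<exists>\<theta>>0. exp (\<i> * complex_of_real \<theta>) = w"
proof (intro exI conjI)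
  show "Arg w + 2*pi > 0" using Arg_bounded[of w] by linarith
  have "cis (Arg w + 2*pi) = cis (Arg w)" by (simp add: cis_mult[symmetric])
  also have "\<dots> = sgn w"
    using assms by (intro cis_Arg) auto
  also have "\<dots> = w"
    using assms by (simp add: sgn_eq)
  finally show "exp (\<i> * complex_of_real (Arg w + 2*pi)) = w" by (simp add: cis_conv_exp)
qed

lemma torus_point_in_trace_space:
  fixes f :: "'e::finite \<Rightarrow> real \<Rightarrow> complex"
  assumes len: "\<forall>e. len e > 0" and "k > 0" and ef: "is_eigenfunction src tgt len k f"
    and z: "\<forall>e. norm (z e) = 1" "\<forall>e\<in>supp_edges len f. z e = exp_vec k len e"
  shows "(z, trace_k k len f) \<in> trace_space src tgt"
proof -
  have sol: "solves_eig src tgt len k f" using ef by (simp add: is_eigenfunction_def)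
  have "\<forall>e. \<exists>\<theta>>0. exp (\<i> * complex_of_real \<theta>) = z e"
    using unit_circle_exp_pos_angle z(1) by blast
  then obtain \<theta> where \<theta>: "\<And>e. \<theta> e > 0" "\<And>e. exp (\<i> * complex_of_real (\<theta> e)) = z e"
    by metis
  define len' where "len' e = (if e \<in> supp_edges len f then len e else \<theta> e / k)" for e
  define g where "g = (\<lambda>e. if e \<in> supp_edges len f then f e else (\<lambda>_. 0 :: complex))"
  have len': "\<forall>e. len' e > 0" using len \<theta>(1) \<open>k > 0\<close> by (simp add: len'_def)
  have same_len: "\<forall>e\<in>supp_edges len f. len' e = len e" by (simp add: len'_def)
  from solves_eig_change_lengths_off_supp[OF len len' same_len sol]
  have sol': "solves_eig src tgt len' k g" by (simp only: g_def)
  have "z = exp_vec k len'"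
  proof
    fix e
    show "z e = exp_vec k len' e"
      using z(2) \<theta>(2)[of e] \<open>k > 0\<close>
      by (cases "e \<in> supp_edges len f") (simp_all add: exp_vec_def len'_def)
  qed
  moreover have "trace_k k len' g = trace_k k len f"
    using trace_k_change_lengths_off_supp[OF \<open>k > 0\<close> len len' same_len sol] by (simp only: g_def)
  moreover obtain e where e: "edge_nonzero len f e"
    using ef by (auto simp: is_eigenfunction_def)
  then have "e \<in> supp_edges len f" by (simp add: supp_edges_def)
  then have "edge_nonzero len' g e"
    using e by (simp add: g_def len'_def edge_nonzero_def edge_int_def)
  then have "is_eigenvalue_sq src tgt len' k"
    using sol' unfolding is_eigenvalue_sq_def is_eigenfunction_def by blast
  ultimately show ?thesis
    unfolding trace_space_def using len' sol' \<open>k > 0\<close>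
    by (intro CollectI exI[of _ len'] exI[of _ k] exI[of _ g]) simp
qed

theorem mainTheorem18:
  fixes src tgt :: "'e::finite \<Rightarrow> 'v" and len :: "'e \<Rightarrow> real" and k :: real
    and f :: "'e \<Rightarrow> real \<Rightarrow> complex"
  assumes "\<forall>e. len e > 0"
    and "k > 0"
    and "is_eigenfunction src tgt len k f"
  shows "trace_fibre src tgt (trace_k k len f) =
           {z. (\<forall>e. norm (z e) = 1) \<and> (\<forall>e\<in>supp_edges len f. z e = exp_vec k len e)}
         \<and> trace_fibre src tgt (trace_k k len f) \<subseteq> Sigma_graph src tgt"
proof
  have sol: "solves_eig src tgt len k f"
    using assms(3) by (simp add: is_eigenfunction_def)
  show "trace_fibre src tgt (trace_k k len f) =
      {z. (\<forall>e. norm (z e) = 1) \<and> (\<forall>e\<in>supp_edges len f. z e = exp_vec k len e)}"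
    unfolding trace_fibre_eq
    using trace_space_torus trace_space_phase_on_supp[OF assms(1,2) sol]
      torus_point_in_trace_space[OF assms] by blast
  show "trace_fibre src tgt (trace_k k len f) \<subseteq> Sigma_graph src tgt"
    by (simp add: trace_fibre_def)
qed

end
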